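(* Under the setting of the algorithm in the context, fix $\delta>0$ and set, for each $i$, $$\epsilon_i=\delta\frac{q_i}{c_i(q_i-|s_i-1|)}.$$ Then for every $i_0\in\{1,\dots,n\}$, every pair of initial states $\theta_0^{(1)},\theta_0^{(2)}$ with $|\theta^{(2)}_{0,i_0}-\theta^{(1)}_{0,i_0}|\le\delta$ and $\theta^{(2)}_{0,i}=\theta^{(1)}_{0,i}$ for $i\neq i_0$, and every Borel set $\mathcal{O}\subseteq(\mathbb{R}^n)^{\mathbb{N}}$, $$\mathbb{P}\{\boldsymbol\eta: X_{\theta_0^{(1)}}(\boldsymbol\eta)\in\mathcal{O}\}\le e^{\epsilon_{i_0}}\,\mathbb{P}\{\boldsymbol\eta: X_{\theta_0^{(2)}}(\boldsymbol\eta)\in\mathcal{O}\}.$$ Consequently the algorithm is $\epsilon$-differentially private with $\epsilon=\max_i\epsilon_i$.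
   Context: $n$ agents communicate over an undirected connected weighted graph with symmetric nonnegative adjacency matrix $A$, weighted degree matrix $D=\mathrm{diag}(A\mathbf{1}_n)$, Laplacian $L=D-A$, and maximal weighted degree $d_{\max}$. The algorithm is $$\theta(k+1)=\theta(k)-hLx(k)+S\eta(k),\qquad x(k)=\theta(k)+\eta(k),\qquad \theta(0)=\theta_0,$$ where $0<h<1/d_{\max}$, $S=\mathrm{diag}(s_1,\dots,s_n)$ with $s_i\in(0,2)$, and the noises $\eta_i(k)$ are mutually independent with $\eta_i(k)\sim\mathrm{Lap}(c_iq_i^k)$ (zero-mean Laplace with density $\frac{1}{2b}e^{-|x|/b}$), $c_i>0$, $q_i\in(|s_i-1|,1)$. For fixed $\theta_0$, $X_{\theta_0}:(\mathbb{R}^n)^{\mathbb{N}}\to(\mathbb{R}^n)^{\mathbb{N}}$ maps the noise sequence $\boldsymbol\eta=\{\eta(k)\}_{k\ge0}$ to the message sequence $\{x(k)\}_{k\ge0}$. Initial states are $\delta$-adjacent if they differ in at most one component by at most $\delta$; the algorithm is $\epsilon$-differentially private if the displayed inequality holds with $e^{\epsilon}$ for all $\delta$-adjacent pairs and all Borel $\mathcal{O}$ (product topology). *)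

theory Defs
  imports "HOL-Probability.Probability"
begin

(* Agents are indexed by a finite type 'n (so n = CARD('n)); vectors in R^n are 'n => real. *)

definition laplace :: "real \<Rightarrow> real measure" where
  "laplace b = density lborel (\<lambda>x. ennreal (exp (- \<bar>x\<bar> / b) / (2 * b)))"

definition wdeg :: "('n::finite \<Rightarrow> 'n \<Rightarrow> real) \<Rightarrow> 'n \<Rightarrow> real" where
  "wdeg A i = (\<Sum>j\<in>UNIV. A i j)"

definition dmax :: "('n::finite \<Rightarrow> 'n \<Rightarrow> real) \<Rightarrow> real" where
  "dmax A = Max (range (wdeg A))"

definition lap :: "('n::finite \<Rightarrow> 'n \<Rightarrow> real) \<Rightarrow> ('n \<Rightarrow> real) \<Rightarrow> ('n \<Rightarrow> real)" where
  "lap A x = (\<lambda>i. wdeg A i * x i - (\<Sum>j\<in>UNIV. A i j * x j))"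

definition graph_ok :: "('n::finite \<Rightarrow> 'n \<Rightarrow> real) \<Rightarrow> bool" where
  "graph_ok A \<longleftrightarrow> (\<forall>i j. A i j = A j i) \<and> (\<forall>i j. 0 \<le> A i j) \<and>
     (\<forall>i j. (i, j) \<in> {(a, b). 0 < A a b}\<^sup>*)"

fun theta :: "('n::finite \<Rightarrow> 'n \<Rightarrow> real) \<Rightarrow> real \<Rightarrow> ('n \<Rightarrow> real) \<Rightarrow> ('n \<Rightarrow> real)
     \<Rightarrow> (nat \<Rightarrow> 'n \<Rightarrow> real) \<Rightarrow> nat \<Rightarrow> ('n \<Rightarrow> real)" where
  "theta A h s th0 eta 0 = th0"
| "theta A h s th0 eta (Suc k) =
     (\<lambda>i. theta A h s th0 eta k i
          - h * lap A (\<lambda>j. theta A h s th0 eta k j + eta k j) i + s i * eta k i)"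

definition Xmap :: "('n::finite \<Rightarrow> 'n \<Rightarrow> real) \<Rightarrow> real \<Rightarrow> ('n \<Rightarrow> real) \<Rightarrow> ('n \<Rightarrow> real)
     \<Rightarrow> (nat \<Rightarrow> 'n \<Rightarrow> real) \<Rightarrow> (nat \<Rightarrow> 'n \<Rightarrow> real)" where
  "Xmap A h s th0 eta = (\<lambda>k i. theta A h s th0 eta k i + eta k i)"

definition noise :: "('n \<Rightarrow> real) \<Rightarrow> ('n \<Rightarrow> real) \<Rightarrow> (nat \<Rightarrow> 'n \<Rightarrow> real) measure" where
  "noise c q = (\<Pi>\<^sub>M k\<in>UNIV. \<Pi>\<^sub>M i\<in>UNIV. laplace (c i * q i ^ k))"

definition adjacent :: "real \<Rightarrow> ('n \<Rightarrow> real) \<Rightarrow> ('n \<Rightarrow> real) \<Rightarrow> bool" where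
  "adjacent \<delta> t1 t2 \<longleftrightarrow> (\<exists>i0. \<bar>t2 i0 - t1 i0\<bar> \<le> \<delta> \<and> (\<forall>i. i \<noteq> i0 \<longrightarrow> t2 i = t1 i))"

definition diff_private ::
  "('n::finite \<Rightarrow> 'n \<Rightarrow> real) \<Rightarrow> real \<Rightarrow> ('n \<Rightarrow> real) \<Rightarrow> ('n \<Rightarrow> real) \<Rightarrow> ('n \<Rightarrow> real)
    \<Rightarrow> real \<Rightarrow> real \<Rightarrow> bool" where
  "diff_private A h s c q \<delta> \<epsilon> \<longleftrightarrow>
     (\<forall>t1 t2 U. adjacent \<delta> t1 t2 \<longrightarrow> U \<in> sets (borel :: (nat \<Rightarrow> 'n \<Rightarrow> real) measure) \<longrightarrow>
        measure (noise c q) {eta \<in> space (noise c q). Xmap A h s t1 eta \<in> U}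
        \<le> exp \<epsilon> * measure (noise c q) {eta \<in> space (noise c q). Xmap A h s t2 eta \<in> U})"

end

theory Submission
  imports Defs
begin

text \<open>Changing the initial state of agent \<open>i0\<close> by \<open>D\<close> is undone by adding \<open>(1 - s i0)^k * D\<close>
  to the noise \<open>\<eta> k i0\<close>: the messages are then unchanged. Shifting a \<open>Lap(b)\<close> variable by \<open>a\<close>
  changes its density by at most the factor \<open>exp (|a| / b)\<close>, so the noise law is dominated by
  \<open>exp \<epsilon>\<close> times its image under this shift, where
  \<open>\<epsilon> = (\<Sum>k. |1 - s i0|^k * |D| / (c i0 * q i0^k)) \<le> \<delta> * q i0 / (c i0 * (q i0 - |s i0 - 1|))\<close>.
  The domination tensorises over finite products by Fubini and passes to the infinite product
  because cylinder sets approximate all measurable sets. Neither the graph nor the step size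
  enters the bound.\<close>

lemma prob_space_laplace:
  assumes b: "0 < b"
  shows "prob_space (laplace b)"
proof -
  \<comment> \<open>The Laplace density is the average of the exponential density and its reflection.\<close>
  define l where "l = 1 / b"
  have l: "0 < l" using b by (simp add: l_def)
  have exponential_integral: "(\<integral>\<^sup>+x. ennreal (exponential_density l x) \<partial>lborel) = 1"
    using prob_space.emeasure_space_1[OF prob_space_exponential_density[OF l]]
    by (simp add: emeasure_density)
  have reflected_integral: "(\<integral>\<^sup>+x. ennreal (exponential_density l (-x)) \<partial>lborel) = 1"
    using nn_integral_real_affine[of "\<lambda>x. ennreal (exponential_density l x)" "-1" 0] exponential_integral
    by simp
  have density_average: "AE x in lborel. ennreal (exp (- \<bar>x\<bar> / b) / (2 * b)) =
      (ennreal (exponential_density l x) + ennreal (exponential_density l (-x))) / 2"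
    using AE_lborel_singleton[of 0]
  proof eventually_elim
    case (elim x)
    have "exp (- \<bar>x\<bar> / b) / (2 * b) = (exponential_density l x + exponential_density l (-x)) / 2"
      using elim b by (auto simp: exponential_density_def l_def field_simps)
    also have "ennreal \<dots> = ennreal (exponential_density l x + exponential_density l (-x)) / 2"
      by (rule ennreal_divide_numeral[symmetric])
        (use l in \<open>auto simp: exponential_density_def intro!: add_nonneg_nonneg\<close>)
    also have "\<dots> = (ennreal (exponential_density l x) + ennreal (exponential_density l (-x))) / 2"
      by (subst ennreal_plus) (use l in \<open>auto simp: exponential_density_def\<close>)
    finally show ?case .
  qed
  have "emeasure (laplace b) (space (laplace b)) =
      (\<integral>\<^sup>+x. ennreal (exp (- \<bar>x\<bar> / b) / (2 * b)) \<partial>lborel)"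
    unfolding laplace_def by (subst emeasure_density) (auto simp: space_density)
  also have "\<dots> = (\<integral>\<^sup>+x. (ennreal (exponential_density l x) + ennreal (exponential_density l (-x))) / 2 \<partial>lborel)"
    by (rule nn_integral_cong_AE[OF density_average])
  also have "\<dots> = 1"
    by (simp add: nn_integral_divide nn_integral_add exponential_integral reflected_integral)
  finally show ?thesis by (rule prob_spaceI)
qed

text \<open>\<open>M \<le> C \<cdot> T\<^sub>*M\<close>, stated for nonnegative integrands so that it tensorises by Fubini.\<close>

definition dominated_by_pushforward :: "'a measure \<Rightarrow> ('a \<Rightarrow> 'a) \<Rightarrow> ennreal \<Rightarrow> bool" where
  "dominated_by_pushforward M T C \<longleftrightarrow> T \<in> M \<rightarrow>\<^sub>M M \<and>
     (\<forall>f\<in>borel_measurable M. integral\<^sup>N M f \<le> C * (\<integral>\<^sup>+x. f (T x) \<partial>M))"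

lemma dominated_by_pushforward_id: "dominated_by_pushforward M (\<lambda>x. x) 1"
  by (simp add: dominated_by_pushforward_def)

lemma dominated_by_pushforward_laplace_shift:
  assumes b: "0 < b"
  shows "dominated_by_pushforward (laplace b) (\<lambda>x. x + a) (ennreal (exp (\<bar>a\<bar> / b)))"
  unfolding dominated_by_pushforward_def
proof (intro conjI ballI)
  have sets_laplace: "sets (laplace b) = sets borel" by (simp add: laplace_def)
  show "(\<lambda>x. x + a) \<in> laplace b \<rightarrow>\<^sub>M laplace b"
    unfolding measurable_cong_sets[OF sets_laplace sets_laplace] by measurable
  fix f :: "real \<Rightarrow> ennreal" assume "f \<in> borel_measurable (laplace b)"
  then have [measurable]: "f \<in> borel_measurable borel"
    using measurable_cong_sets[OF sets_laplace refl] by blast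
  define p where "p x = ennreal (exp (- \<bar>x\<bar> / b) / (2 * b))" for x
  have [measurable]: "p \<in> borel_measurable borel" unfolding p_def by measurable
  have p_shift: "p y \<le> ennreal (exp (\<bar>a\<bar> / b)) * p (y - a)" for y
  proof -
    have "- \<bar>y\<bar> / b \<le> \<bar>a\<bar> / b + - \<bar>y - a\<bar> / b"
      using b abs_triangle_ineq4[of y a] by (simp add: field_simps)
    then have "exp (- \<bar>y\<bar> / b) / (2 * b) \<le> exp (\<bar>a\<bar> / b) * (exp (- \<bar>y - a\<bar> / b) / (2 * b))"
      using b by (simp add: divide_right_mono exp_add[symmetric])
    then show ?thesis unfolding p_def using b by (simp add: ennreal_mult[symmetric])
  qed
  have "integral\<^sup>N (laplace b) f = (\<integral>\<^sup>+y. p y * f y \<partial>lborel)"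
    unfolding laplace_def p_def by (subst nn_integral_density) auto
  also have "\<dots> \<le> (\<integral>\<^sup>+y. ennreal (exp (\<bar>a\<bar> / b)) * (p (y - a) * f y) \<partial>lborel)"
    using p_shift by (intro nn_integral_mono) (metis mult.assoc mult_right_mono zero_le)
  also have "\<dots> = ennreal (exp (\<bar>a\<bar> / b)) * (\<integral>\<^sup>+y. p (y - a) * f y \<partial>lborel)"
    by (rule nn_integral_cmult) measurable
  also have "(\<integral>\<^sup>+y. p (y - a) * f y \<partial>lborel) = (\<integral>\<^sup>+x. p x * f (x + a) \<partial>lborel)"
    using nn_integral_real_affine[of "\<lambda>y. p (y - a) * f y" 1 a] by (simp add: add.commute)
  also have "\<dots> = (\<integral>\<^sup>+x. f (x + a) \<partial>laplace b)"
    unfolding laplace_def p_def by (subst nn_integral_density) auto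
  finally show "integral\<^sup>N (laplace b) f \<le> ennreal (exp (\<bar>a\<bar> / b)) * (\<integral>\<^sup>+x. f (x + a) \<partial>laplace b)" .
qed

lemma dominated_by_pushforward_emeasure_le:
  assumes dom: "dominated_by_pushforward M T C" and X: "X \<in> sets M"
  shows "emeasure M X \<le> C * emeasure M (T -` X \<inter> space M)"
proof -
  have T: "T \<in> M \<rightarrow>\<^sub>M M" using dom by (simp add: dominated_by_pushforward_def)
  have "emeasure M X = (\<integral>\<^sup>+x. indicator X x \<partial>M)" using X by simp
  also have "\<dots> \<le> C * (\<integral>\<^sup>+x. indicator X (T x) \<partial>M)"
    using dom X unfolding dominated_by_pushforward_def by (auto simp del: nn_integral_indicator)
  also have "(\<integral>\<^sup>+x. indicator X (T x) \<partial>M) = (\<integral>\<^sup>+x. indicator (T -` X \<inter> space M) x \<partial>M)"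
    by (rule nn_integral_cong) (auto simp: indicator_def)
  also have "\<dots> = emeasure M (T -` X \<inter> space M)"
    using measurable_sets[OF T X] by simp
  finally show ?thesis .
qed

lemma dominated_by_pushforward_measure_le:
  assumes "finite_measure M" and dom: "dominated_by_pushforward M T (ennreal C)"
    and C: "0 \<le> C" and X: "X \<in> sets M"
  shows "measure M X \<le> C * measure M (T -` X \<inter> space M)"
proof -
  interpret finite_measure M by fact
  have "ennreal (measure M X) \<le> ennreal (C * measure M (T -` X \<inter> space M))"
    using dominated_by_pushforward_emeasure_le[OF dom X] C
    by (simp add: emeasure_eq_measure ennreal_mult)
  then show ?thesis using C by (simp add: ennreal_le_iff)
qed

lemma measurable_restrict_componentwise:
  assumes "\<And>j. j \<in> I \<Longrightarrow> T j \<in> M j \<rightarrow>\<^sub>M M j"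
  shows "(\<lambda>x. \<lambda>j\<in>I. T j (x j)) \<in> PiM I M \<rightarrow>\<^sub>M PiM I M"
proof (rule measurable_restrict)
  fix j assume j: "j \<in> I"
  show "(\<lambda>x. T j (x j)) \<in> PiM I M \<rightarrow>\<^sub>M M j"
    by (rule measurable_compose[OF measurable_component_singleton[OF j, of M] assms[OF j]])
qed

lemma dominated_by_pushforward_PiM_insert:
  fixes M :: "'i \<Rightarrow> 'a measure"
  assumes J: "finite J" "i \<notin> J" and sf: "\<And>j. sigma_finite_measure (M j)"
    and dom: "\<And>j. j \<in> insert i J \<Longrightarrow> dominated_by_pushforward (M j) (T j) (C j)"
    and dom_J: "dominated_by_pushforward (PiM J M) (\<lambda>x. \<lambda>j\<in>J. T j (x j)) C_J"
  shows "dominated_by_pushforward (PiM (insert i J) M) (\<lambda>x. \<lambda>j\<in>insert i J. T j (x j)) (C i * C_J)"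
proof -
  interpret product_sigma_finite M by (simp add: product_sigma_finite_def sf)
  let ?S = "\<lambda>x. \<lambda>j\<in>insert i J. T j (x j)" and ?SJ = "\<lambda>x. \<lambda>j\<in>J. T j (x j)"
  have dom_i: "dominated_by_pushforward (M i) (T i) (C i)" using dom by simp
  then have [measurable]: "T i \<in> M i \<rightarrow>\<^sub>M M i" by (simp add: dominated_by_pushforward_def)
  have S[measurable]: "?S \<in> PiM (insert i J) M \<rightarrow>\<^sub>M PiM (insert i J) M"
    using dom by (intro measurable_restrict_componentwise) (simp add: dominated_by_pushforward_def)
  have upd: "(\<lambda>p. (fst p)(i := snd p)) \<in> PiM J M \<Otimes>\<^sub>M M i \<rightarrow>\<^sub>M PiM (insert i J) M"
    by (rule measurable_fun_upd[where J=J]) auto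
  have "integral\<^sup>N (PiM (insert i J) M) f \<le> C i * C_J * (\<integral>\<^sup>+x. f (?S x) \<partial>PiM (insert i J) M)"
    if f[measurable]: "f \<in> borel_measurable (PiM (insert i J) M)" for f
  proof -
    have [measurable]: "(\<lambda>(x, y). f (x(i := y))) \<in> borel_measurable (PiM J M \<Otimes>\<^sub>M M i)"
      using measurable_comp[OF upd f] by (simp add: comp_def case_prod_beta')
    define g where "g x = (\<integral>\<^sup>+y. f (x(i := T i y)) \<partial>M i)" for x
    have g: "g \<in> borel_measurable (PiM J M)"
      unfolding g_def by measurable
    have "integral\<^sup>N (PiM (insert i J) M) f = (\<integral>\<^sup>+x. (\<integral>\<^sup>+y. f (x(i := y)) \<partial>M i) \<partial>PiM J M)"
      by (rule product_nn_integral_insert) (use J in auto)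
    also have "\<dots> \<le> (\<integral>\<^sup>+x. C i * g x \<partial>PiM J M)"
    proof (rule nn_integral_mono)
      fix x assume x: "x \<in> space (PiM J M)"
      have "(\<lambda>y. f (x(i := y))) \<in> borel_measurable (M i)"
        using measurable_comp[OF measurable_component_update[OF x J(2)] f] by (simp add: comp_def)
      then show "(\<integral>\<^sup>+y. f (x(i := y)) \<partial>M i) \<le> C i * g x"
        using dom_i unfolding dominated_by_pushforward_def g_def by blast
    qed
    also have "\<dots> = C i * (\<integral>\<^sup>+x. g x \<partial>PiM J M)"
      by (rule nn_integral_cmult) (rule g)
    also have "\<dots> \<le> C i * (C_J * (\<integral>\<^sup>+x. g (?SJ x) \<partial>PiM J M))"
      using dom_J g unfolding dominated_by_pushforward_def by (intro mult_left_mono) auto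
    also have "(\<integral>\<^sup>+x. g (?SJ x) \<partial>PiM J M) = (\<integral>\<^sup>+x. (\<integral>\<^sup>+y. f (?S (x(i := y))) \<partial>M i) \<partial>PiM J M)"
    proof -
      have "(?SJ x)(i := T i y) = ?S (x(i := y))" for x y
        using J(2) by (auto simp: fun_eq_iff restrict_def)
      then show ?thesis unfolding g_def by simp
    qed
    also have "\<dots> = (\<integral>\<^sup>+x. f (?S x) \<partial>PiM (insert i J) M)"
      by (rule product_nn_integral_insert[symmetric]) (use J in auto)
    finally show ?thesis by (simp add: mult.assoc)
  qed
  then show ?thesis using S unfolding dominated_by_pushforward_def by blast
qed

lemma dominated_by_pushforward_PiM:
  fixes M :: "'i \<Rightarrow> 'a measure"
  assumes J: "finite J" and sf: "\<And>j. sigma_finite_measure (M j)"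
    and dom: "\<And>j. j \<in> J \<Longrightarrow> dominated_by_pushforward (M j) (T j) (C j)"
  shows "dominated_by_pushforward (PiM J M) (\<lambda>x. \<lambda>j\<in>J. T j (x j)) (\<Prod>j\<in>J. C j)"
  using J dom
proof (induction J rule: finite_induct)
  case empty
  have "(\<lambda>x. \<lambda>j\<in>{}. T j (x j)) \<in> PiM {} M \<rightarrow>\<^sub>M PiM {} M"
    by (rule measurable_restrict_componentwise) simp
  moreover have "integral\<^sup>N (PiM {} M) f = (\<integral>\<^sup>+x. f (\<lambda>j\<in>{}. T j (x j)) \<partial>PiM {} M)" for f
    by (rule nn_integral_cong) (auto simp: space_PiM_empty restrict_def)
  ultimately show ?case
    unfolding dominated_by_pushforward_def prod.empty mult_1 by auto
next
  case (insert i J)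
  have "dominated_by_pushforward (PiM J M) (\<lambda>x. \<lambda>j\<in>J. T j (x j)) (\<Prod>j\<in>J. C j)"
    by (rule insert.IH) (rule insert.prems, simp)
  with insert(1,2) sf insert.prems show ?case
    unfolding prod.insert[OF insert(1,2)] by (rule dominated_by_pushforward_PiM_insert)
qed

lemma dominated_by_pushforward_PiM_laplace_shift:
  fixes b :: "'i::finite \<Rightarrow> real"
  assumes b: "\<And>i. 0 < b i"
  shows "dominated_by_pushforward (PiM UNIV (\<lambda>i. laplace (b i)))
    (\<lambda>x i. x i + (if i = i0 then a else 0)) (ennreal (exp (\<bar>a\<bar> / b i0)))"
proof -
  let ?T = "\<lambda>i. if i = i0 then (\<lambda>y. y + a) else (\<lambda>y. y)"
  let ?C = "\<lambda>i. if i = i0 then ennreal (exp (\<bar>a\<bar> / b i0)) else 1"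
  have "dominated_by_pushforward (PiM UNIV (\<lambda>i. laplace (b i))) (\<lambda>x. \<lambda>i\<in>UNIV. ?T i (x i))
      (\<Prod>i\<in>UNIV. ?C i)"
    by (rule dominated_by_pushforward_PiM)
      (auto intro: prob_space_imp_sigma_finite prob_space_laplace b
        dominated_by_pushforward_laplace_shift dominated_by_pushforward_id)
  moreover have "(\<lambda>x. \<lambda>i\<in>UNIV. ?T i (x i)) = (\<lambda>x i. x i + (if i = i0 then a else 0))"
    by (auto simp: fun_eq_iff)
  ultimately show ?thesis by simp
qed

lemma (in finite_measure) eventually_measure_UN_diff_less:
  assumes F: "range F \<subseteq> sets M" and e: "0 < e"
  shows "eventually (\<lambda>n. measure M ((\<Union>i. F i) - (\<Union>i<n. F i)) < e) sequentially"
proof -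
  have "incseq (\<lambda>n. \<Union>i<n. F i)"
    by (auto simp: incseq_def intro: less_le_trans)
  moreover have "(\<Union>n. \<Union>i<n. F i) = (\<Union>i. F i)" by auto
  moreover have "range (\<lambda>n. \<Union>i<n. F i) \<subseteq> sets M" using F by auto
  ultimately have "(\<lambda>n. measure M (\<Union>i<n. F i)) \<longlonglongrightarrow> measure M (\<Union>i. F i)"
    using finite_Lim_measure_incseq[of "\<lambda>n. \<Union>i<n. F i"] by simp
  then have "eventually (\<lambda>n. measure M (\<Union>i. F i) - e < measure M (\<Union>i<n. F i)) sequentially"
    using e by (intro order_tendstoD(1)) auto
  then show ?thesis
  proof eventually_elim
    case (elim n)
    then show ?case
      using F by (subst finite_measure_Diff) auto
  qed
qed

lemma (in finite_measure) measure_symdiff_UN_less: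
  assumes F: "range F \<subseteq> sets M" and G: "range G \<subseteq> sets M"
    and tail: "measure M ((\<Union>i. F i) - (\<Union>i<n. F i)) < e / 2"
    and approx: "\<And>i. measure M (sym_diff (F i) (G i)) < e / (2 * (real n + 1))"
  shows "measure M (sym_diff (\<Union>i. F i) (\<Union>i<n. G i)) < e"
proof -
  let ?R = "(\<Union>i. F i) - (\<Union>i<n. F i)" and ?D = "\<lambda>i. sym_diff (F i) (G i)"
  have D: "?D i \<in> sets M" for i using F G by auto
  have "measure M (sym_diff (\<Union>i. F i) (\<Union>i<n. G i))
      \<le> measure M (?R \<union> (\<Union>i<n. ?D i))"
    using F D by (intro finite_measure_mono) auto
  also have "\<dots> \<le> measure M ?R + measure M (\<Union>i<n. ?D i)"
    using F D by (intro measure_Un_le) auto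
  also have "measure M (\<Union>i<n. ?D i) \<le> (\<Sum>i<n. measure M (?D i))"
    using D by (intro measure_UNION_le) auto
  also have "\<dots> \<le> real n * (e / (2 * (real n + 1)))"
    using sum_mono[of "{..<n}" "\<lambda>i. measure M (?D i)" "\<lambda>_. e / (2 * (real n + 1))"] approx
    by (simp add: less_imp_le)
  also have "\<dots> \<le> e / 2"
  proof -
    have "0 \<le> e" using tail measure_nonneg[of M ?R] by linarith
    then show ?thesis by (simp add: field_simps)
  qed
  finally show ?thesis using tail by linarith
qed

lemma sigma_sets_approx_by_algebra:
  assumes "algebra \<Omega> A" and fin_mu: "finite_measure mu" and fin_nu: "finite_measure nu"
    and sets_mu: "sets mu = sigma_sets \<Omega> A" and sets_nu: "sets nu = sigma_sets \<Omega> A"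
    and S: "S \<in> sigma_sets \<Omega> A" and e: "0 < e"
  shows "\<exists>G\<in>A. measure mu (sym_diff S G) < e \<and> measure nu (sym_diff S G) < e"
proof -
  interpret algebra \<Omega> A by fact
  interpret mu: finite_measure mu by (rule fin_mu)
  interpret nu: finite_measure nu by (rule fin_nu)
  \<comment> \<open>The approximable sets form a Dynkin system containing the \<open>Int\<close>-stable algebra.\<close>
  have "Int_stable A" by (auto simp: Int_stable_def Int)
  then have "\<forall>e>0. \<exists>G\<in>A. measure mu (sym_diff S G) < e \<and> measure nu (sym_diff S G) < e"
    using space_closed S
  proof (induction rule: sigma_sets_induct_disjoint)
    case (basic G)
    then show ?case by force
  next
    case empty
    then show ?case by force
  next
    case (compl X)
    show ?case
    proof (intro allI impI)
      fix e :: real assume "0 < e"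
      then obtain G where G: "G \<in> A" "measure mu (sym_diff X G) < e" "measure nu (sym_diff X G) < e"
        using compl by blast
      have "X \<subseteq> \<Omega>" using compl(1) sigma_sets_into_sp[OF space_closed] by blast
      moreover have "G \<subseteq> \<Omega>" using G(1) space_closed by blast
      ultimately have "sym_diff (\<Omega> - X) (\<Omega> - G) = sym_diff X G"
        by blast
      then show "\<exists>G\<in>A. measure mu (sym_diff (\<Omega> - X) G) < e
          \<and> measure nu (sym_diff (\<Omega> - X) G) < e"
        using G by (intro bexI[of _ "\<Omega> - G"]) (auto simp: compl_sets)
    qed
  next
    case (union F)
    show ?case
    proof (intro allI impI)
      fix e :: real assume e: "0 < e"
      have "F i \<in> sigma_sets \<Omega> A" for i using union(2) by blast
      then have F_mu: "range F \<subseteq> sets mu" and F_nu: "range F \<subseteq> sets nu"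
        using sets_mu sets_nu by auto
      have "0 < e / 2" using e by simp
      then obtain n where
        tail_mu: "measure mu ((\<Union>i. F i) - (\<Union>i<n. F i)) < e / 2" and
        tail_nu: "measure nu ((\<Union>i. F i) - (\<Union>i<n. F i)) < e / 2"
        using eventually_happens'[OF sequentially_bot eventually_conj[OF
            mu.eventually_measure_UN_diff_less[OF F_mu] nu.eventually_measure_UN_diff_less[OF F_nu]]]
        by blast
      have "0 < e / (2 * (real n + 1))" using e by simp
      then have "\<forall>i. \<exists>G\<in>A. measure mu (sym_diff (F i) G) < e / (2 * (real n + 1))
          \<and> measure nu (sym_diff (F i) G) < e / (2 * (real n + 1))"
        using union(3) by blast
      then obtain G where G: "\<And>i. G i \<in> A"
        "\<And>i. measure mu (sym_diff (F i) (G i)) < e / (2 * (real n + 1))"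
        "\<And>i. measure nu (sym_diff (F i) (G i)) < e / (2 * (real n + 1))"
        by metis
      have "range G \<subseteq> sets mu" "range G \<subseteq> sets nu" using G(1) sets_mu sets_nu by auto
      then show "\<exists>G\<in>A. measure mu (sym_diff (\<Union>i. F i) G) < e
          \<and> measure nu (sym_diff (\<Union>i. F i) G) < e"
        using G F_mu F_nu tail_mu tail_nu
        by (intro bexI[of _ "\<Union>i<n. G i"] conjI mu.measure_symdiff_UN_less nu.measure_symdiff_UN_less)
          (auto intro: finite_UN)
    qed
  qed
  then show ?thesis using e by blast
qed

lemma measure_le_cmult_from_algebra:
  assumes "algebra \<Omega> A"
    and fin_mu: "finite_measure mu" and fin_nu: "finite_measure nu"
    and sets_mu: "sets mu = sigma_sets \<Omega> A" and sets_nu: "sets nu = sigma_sets \<Omega> A"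
    and E: "0 \<le> E"
    and le_on_A: "\<And>G. G \<in> A \<Longrightarrow> measure mu G \<le> E * measure nu G"
    and S: "S \<in> sets mu"
  shows "measure mu S \<le> E * measure nu S"
proof (rule field_le_epsilon)
  interpret mu: finite_measure mu by (rule fin_mu)
  interpret nu: finite_measure nu by (rule fin_nu)
  fix e :: real assume e: "0 < e"
  define e' where "e' = e / (E + 1)"
  have "0 < e'" using e E by (simp add: e'_def)
  then obtain G where G: "G \<in> A" "measure mu (sym_diff S G) < e'" "measure nu (sym_diff S G) < e'"
    using sigma_sets_approx_by_algebra[OF assms(1) fin_mu fin_nu sets_mu sets_nu] S sets_mu by blast
  have G_mu: "G \<in> sets mu" and G_nu: "G \<in> sets nu" and S_nu: "S \<in> sets nu"
    using G(1) S sets_mu sets_nu by auto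
  have "measure mu S \<le> measure mu (G \<union> (sym_diff S G))"
    using S G_mu by (intro mu.finite_measure_mono) auto
  also have "\<dots> \<le> measure mu G + measure mu (sym_diff S G)"
    using S G_mu by (intro measure_Un_le) auto
  also have "\<dots> \<le> E * measure nu G + e'" using le_on_A[OF G(1)] G(2) by linarith
  also have "measure nu G \<le> measure nu (S \<union> (sym_diff S G))"
    using S_nu G_nu by (intro nu.finite_measure_mono) auto
  also have "\<dots> \<le> measure nu S + measure nu (sym_diff S G)"
    using S_nu G_nu by (intro measure_Un_le) auto
  finally have "measure mu S \<le> E * (measure nu S + measure nu (sym_diff S G)) + e'"
    using E by (simp add: mult_left_mono)
  also have "\<dots> \<le> E * (measure nu S + e') + e'"
    using E G(3) by (intro add_right_mono mult_left_mono) auto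
  also have "\<dots> = E * measure nu S + (E + 1) * e'"
    by (simp add: algebra_simps)
  also have "(E + 1) * e' = e"
    using E by (simp add: e'_def)
  finally show "measure mu S \<le> E * measure nu S + e" .
qed

lemma prod_emb_preimage_componentwise:
  assumes "\<And>k. T k \<in> space (M k) \<rightarrow> space (M k)"
  shows "(\<lambda>x k. T k (x k)) -` prod_emb UNIV M J X \<inter> space (PiM UNIV M)
    = prod_emb UNIV M J ((\<lambda>x. \<lambda>j\<in>J. T j (x j)) -` X \<inter> space (PiM J M))"
proof -
  have "(\<lambda>j\<in>J. T j (restrict x J j)) = restrict (\<lambda>k. T k (x k)) J" for x
    by auto
  then show ?thesis
    using assms by (auto simp: prod_emb_def space_PiM PiE_iff Pi_iff)
qed

lemma measure_PiM_le_preimage_componentwise: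
  fixes M :: "'i \<Rightarrow> 'a measure" and T :: "'i \<Rightarrow> 'a \<Rightarrow> 'a" and C :: "'i \<Rightarrow> real"
  assumes prob: "\<And>k. prob_space (M k)"
    and dom: "\<And>k. dominated_by_pushforward (M k) (T k) (ennreal (C k))"
    and C: "\<And>k. 0 \<le> C k"
    and bound: "\<And>J. finite J \<Longrightarrow> (\<Prod>k\<in>J. C k) \<le> E"
    and S: "S \<in> sets (PiM UNIV M)"
  shows "measure (PiM UNIV M) S
    \<le> E * measure (PiM UNIV M) ((\<lambda>x k. T k (x k)) -` S \<inter> space (PiM UNIV M))"
proof -
  interpret product_prob_space M UNIV
    by (simp add: product_prob_space_def product_sigma_finite_def product_prob_space_axioms_def
        prob prob_space_imp_sigma_finite)
  let ?P = "PiM UNIV M" and ?\<tau> = "\<lambda>x k. T k (x k)"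
  have T: "T k \<in> M k \<rightarrow>\<^sub>M M k" for k using dom[of k] by (simp add: dominated_by_pushforward_def)
  have "(\<lambda>x. \<lambda>k\<in>UNIV. T k (x k)) \<in> ?P \<rightarrow>\<^sub>M ?P"
    using T by (rule measurable_restrict_componentwise)
  then have \<tau>: "?\<tau> \<in> ?P \<rightarrow>\<^sub>M ?P" by (simp add: restrict_UNIV)
  define nu where "nu = distr ?P ?P ?\<tau>"
  have E: "0 \<le> E" using bound[of "{}"] by simp
  have measure_nu: "measure nu X = measure ?P (?\<tau> -` X \<inter> space ?P)" if "X \<in> sets ?P" for X
    unfolding nu_def by (rule measure_distr[OF \<tau> that])
  have "measure ?P G \<le> E * measure nu G" if "G \<in> generator" for G
  proof -
    from that obtain J X where J: "finite J" and X: "X \<in> sets (PiM J M)" and G: "G = emb UNIV J X"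
      by (auto elim!: generator.cases)
    interpret J: finite_product_prob_space M J by unfold_locales (rule J)
    let ?\<tau>J = "\<lambda>x. \<lambda>j\<in>J. T j (x j)"
    have dom_J: "dominated_by_pushforward (PiM J M) ?\<tau>J (ennreal (\<Prod>j\<in>J. C j))"
      using dominated_by_pushforward_PiM[OF J prob_space_imp_sigma_finite[OF prob] dom]
      by (simp add: prod_ennreal C)
    have Y: "?\<tau>J -` X \<inter> space (PiM J M) \<in> sets (PiM J M)"
      using dom_J X unfolding dominated_by_pushforward_def by (blast intro: measurable_sets)
    have "measure ?P G = measure (PiM J M) X"
      unfolding G using emeasure_PiM_emb'[OF _ J X] by (simp add: measure_def)
    also have "\<dots> \<le> (\<Prod>j\<in>J. C j) * measure (PiM J M) (?\<tau>J -` X \<inter> space (PiM J M))"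
      by (rule dominated_by_pushforward_measure_le[OF _ dom_J _ X])
        (auto intro: prod_nonneg C J.finite_measure_axioms)
    also have "\<dots> \<le> E * measure (PiM J M) (?\<tau>J -` X \<inter> space (PiM J M))"
      using bound[OF J] by (intro mult_right_mono) auto
    also have "measure (PiM J M) (?\<tau>J -` X \<inter> space (PiM J M)) = measure nu G"
      using that sets_PiM_generator emeasure_PiM_emb'[OF _ J Y] measurable_space[OF T]
      by (subst measure_nu) (auto simp: G prod_emb_preimage_componentwise measure_def)
    finally show ?thesis .
  qed
  then have "measure ?P S \<le> E * measure nu S"
    by (intro measure_le_cmult_from_algebra[OF algebra_generator _ _ sets_PiM_generator _ E _ S])
      (auto simp: nu_def sets_PiM_generator intro: finite_measure_distr prob_space_distr[OF \<tau>]
        prob_space.finite_measure P.prob_space_axioms)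
  then show ?thesis using measure_nu[OF S] by simp
qed

lemma theta_perturbed_noise:
  fixes A :: "'n::finite \<Rightarrow> 'n \<Rightarrow> real" and s t1 t2 :: "'n \<Rightarrow> real"
  assumes t: "\<And>i. i \<noteq> i0 \<Longrightarrow> t2 i = t1 i"
  defines "a \<equiv> \<lambda>k i. if i = i0 then (1 - s i0) ^ k * (t2 i0 - t1 i0) else 0"
  shows "theta A h s t1 (\<lambda>k i. eta k i + a k i) k = (\<lambda>i. theta A h s t2 eta k i - a k i)"
proof (induction k)
  case 0
  show ?case using t by (auto simp: a_def fun_eq_iff)
next
  case (Suc k)
  have states: "theta A h s t1 (\<lambda>k i. eta k i + a k i) k j = theta A h s t2 eta k j - a k j" for j
    using Suc by (simp add: fun_eq_iff)
  have messages: "(\<lambda>j. theta A h s t1 (\<lambda>k i. eta k i + a k i) k j + (eta k j + a k j))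
      = (\<lambda>j. theta A h s t2 eta k j + eta k j)"
    by (simp only: states) (auto simp: fun_eq_iff)
  show ?case
    unfolding theta.simps messages by (simp only: states) (auto simp: fun_eq_iff a_def algebra_simps)
qed

lemma Xmap_perturbed_noise:
  fixes A :: "'n::finite \<Rightarrow> 'n \<Rightarrow> real"
  assumes "\<And>i. i \<noteq> i0 \<Longrightarrow> t2 i = t1 i"
  shows "Xmap A h s t1
      (\<lambda>k i. eta k i + (if i = i0 then (1 - s i0) ^ k * (t2 i0 - t1 i0) else 0))
    = Xmap A h s t2 eta"
proof -
  have "theta A h s t1
      (\<lambda>k i. eta k i + (if i = i0 then (1 - s i0) ^ k * (t2 i0 - t1 i0) else 0)) k
    = (\<lambda>i. theta A h s t2 eta k i - (if i = i0 then (1 - s i0) ^ k * (t2 i0 - t1 i0) else 0))" for k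
    by (rule theta_perturbed_noise) (rule assms)
  then show ?thesis by (simp add: Xmap_def fun_eq_iff)
qed

lemma prod_exp_geometric_le:
  fixes c q s D :: real
  assumes c: "0 < c" and q: "\<bar>s - 1\<bar> < q" and D: "\<bar>D\<bar> \<le> \<delta>" and J: "finite J"
  shows "(\<Prod>k\<in>J. exp (\<bar>(1 - s) ^ k * D\<bar> / (c * q ^ k))) \<le> exp (\<delta> * q / (c * (q - \<bar>s - 1\<bar>)))"
proof -
  have q_pos: "0 < q" using q by linarith
  define r where "r = \<bar>1 - s\<bar> / q"
  have r: "0 \<le> r" "r < 1" using q q_pos by (auto simp: r_def abs_minus_commute)
  have summand: "\<bar>(1 - s) ^ k * D\<bar> / (c * q ^ k) = \<bar>D\<bar> / c * r ^ k" for k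
    using q_pos c by (simp add: r_def abs_mult power_abs power_divide field_simps)
  have geometric: "(\<lambda>k. \<bar>D\<bar> / c * r ^ k) sums (\<bar>D\<bar> / c * (1 / (1 - r)))"
    using geometric_sums[of r] r by (intro sums_mult) auto
  have "(\<Prod>k\<in>J. exp (\<bar>(1 - s) ^ k * D\<bar> / (c * q ^ k))) = exp (\<Sum>k\<in>J. \<bar>D\<bar> / c * r ^ k)"
    by (simp add: summand exp_sum J)
  also have "(\<Sum>k\<in>J. \<bar>D\<bar> / c * r ^ k) \<le> \<bar>D\<bar> / c * (1 / (1 - r))"
    using sum_le_suminf[OF sums_summable[OF geometric] J] sums_unique[OF geometric] c r
    by simp
  also have "\<dots> = \<bar>D\<bar> * q / (c * (q - \<bar>s - 1\<bar>))"
    using q_pos c r by (simp add: r_def abs_minus_commute field_simps)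
  also have "\<dots> \<le> \<delta> * q / (c * (q - \<bar>s - 1\<bar>))"
    using q_pos c q D by (intro divide_right_mono mult_right_mono) auto
  finally show ?thesis by simp
qed

lemma noise_measure_Xmap_le:
  fixes A :: "'n::finite \<Rightarrow> 'n \<Rightarrow> real" and t1 t2 c q s :: "'n \<Rightarrow> real"
  assumes c: "\<And>i. 0 < c i" and q: "\<And>i. \<bar>s i - 1\<bar> < q i"
    and close: "\<bar>t2 i0 - t1 i0\<bar> \<le> \<delta>" and t: "\<And>i. i \<noteq> i0 \<Longrightarrow> t2 i = t1 i"
  shows "measure (noise c q) {eta \<in> space (noise c q). Xmap A h s t1 eta \<in> U}
    \<le> exp (\<delta> * q i0 / (c i0 * (q i0 - \<bar>s i0 - 1\<bar>)))
      * measure (noise c q) {eta \<in> space (noise c q). Xmap A h s t2 eta \<in> U}"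
proof -
  let ?M = "\<lambda>k. PiM UNIV (\<lambda>i. laplace (c i * q i ^ k))"
  let ?a = "\<lambda>k. (1 - s i0) ^ k * (t2 i0 - t1 i0)"
  let ?T = "\<lambda>k x i. x i + (if i = i0 then ?a k else 0)"
  let ?C = "\<lambda>k. exp (\<bar>?a k\<bar> / (c i0 * q i0 ^ k))"
  let ?S = "\<lambda>t. {eta \<in> space (noise c q). Xmap A h s t eta \<in> U}"
  have b: "0 < c i * q i ^ k" for i k
    using c[of i] le_less_trans[OF abs_ge_zero q[of i]] by simp
  have noise: "noise c q = PiM UNIV ?M" by (simp add: noise_def)
  have space: "space (noise c q) = UNIV" by (simp add: noise space_PiM laplace_def)
  have preimage: "(\<lambda>x k. ?T k (x k)) -` ?S t1 \<inter> space (PiM UNIV ?M) = ?S t2"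
    using Xmap_perturbed_noise[of i0 t2 t1 A h s] t by (auto simp: space noise[symmetric])
  show ?thesis
  proof (cases "?S t1 \<in> sets (noise c q)")
    case True
    have "measure (PiM UNIV ?M) (?S t1) \<le> exp (\<delta> * q i0 / (c i0 * (q i0 - \<bar>s i0 - 1\<bar>)))
        * measure (PiM UNIV ?M) ((\<lambda>x k. ?T k (x k)) -` ?S t1 \<inter> space (PiM UNIV ?M))"
    proof (rule measure_PiM_le_preimage_componentwise)
      show "prob_space (?M k)" for k
        by (rule prob_space_PiM) (rule prob_space_laplace[OF b])
      show "dominated_by_pushforward (?M k) (?T k) (ennreal (?C k))" for k
        by (rule dominated_by_pushforward_PiM_laplace_shift[OF b])
      show "(\<Prod>k\<in>J. ?C k) \<le> exp (\<delta> * q i0 / (c i0 * (q i0 - \<bar>s i0 - 1\<bar>)))" if "finite J" for J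
        by (rule prod_exp_geometric_le[OF c q close that])
    qed (use True noise in auto)
    from this[unfolded preimage] show ?thesis by (simp only: noise)
  next
    case False
    then show ?thesis by (simp add: measure_notin_sets)
  qed
qed

theorem mainTheorem6:
  fixes A :: "'n::finite \<Rightarrow> 'n \<Rightarrow> real" and h \<delta> :: real
    and s c q :: "'n \<Rightarrow> real"
  assumes "graph_ok A"
    and "0 < h" and "h < 1 / dmax A"
    and "\<And>i. 0 < s i \<and> s i < 2"
    and "\<And>i. 0 < c i"
    and "\<And>i. \<bar>s i - 1\<bar> < q i \<and> q i < 1"
    and "0 < \<delta>"
  defines "eps \<equiv> \<lambda>i. \<delta> * q i / (c i * (q i - \<bar>s i - 1\<bar>))"
  shows "(\<forall>i0 t1 t2 U. \<bar>t2 i0 - t1 i0\<bar> \<le> \<delta> \<longrightarrow> (\<forall>i. i \<noteq> i0 \<longrightarrow> t2 i = t1 i) \<longrightarrow>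
            U \<in> sets (borel :: (nat \<Rightarrow> 'n \<Rightarrow> real) measure) \<longrightarrow>
            measure (noise c q) {eta \<in> space (noise c q). Xmap A h s t1 eta \<in> U}
            \<le> exp (eps i0) * measure (noise c q) {eta \<in> space (noise c q). Xmap A h s t2 eta \<in> U})
       \<and> diff_private A h s c q \<delta> (Max (range eps))"
proof -
  have single: "measure (noise c q) {eta \<in> space (noise c q). Xmap A h s t1 eta \<in> U}
      \<le> exp (eps i0) * measure (noise c q) {eta \<in> space (noise c q). Xmap A h s t2 eta \<in> U}"
    if "\<bar>t2 i0 - t1 i0\<bar> \<le> \<delta>" "\<forall>i. i \<noteq> i0 \<longrightarrow> t2 i = t1 i" for i0 t1 t2 U
    unfolding eps_def by (rule noise_measure_Xmap_le[OF assms(5)]) (use assms(6) that in auto)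
  have "diff_private A h s c q \<delta> (Max (range eps))"
    unfolding diff_private_def adjacent_def
  proof (intro allI impI)
    fix t1 t2 :: "'n \<Rightarrow> real" and U :: "(nat \<Rightarrow> 'n \<Rightarrow> real) set"
    assume "\<exists>i0. \<bar>t2 i0 - t1 i0\<bar> \<le> \<delta> \<and> (\<forall>i. i \<noteq> i0 \<longrightarrow> t2 i = t1 i)"
    then obtain i0 where "\<bar>t2 i0 - t1 i0\<bar> \<le> \<delta>" "\<forall>i. i \<noteq> i0 \<longrightarrow> t2 i = t1 i" by blast
    then have "measure (noise c q) {eta \<in> space (noise c q). Xmap A h s t1 eta \<in> U}
        \<le> exp (eps i0) * measure (noise c q) {eta \<in> space (noise c q). Xmap A h s t2 eta \<in> U}"
      by (rule single)
    also have "\<dots> \<le> exp (Max (range eps))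
        * measure (noise c q) {eta \<in> space (noise c q). Xmap A h s t2 eta \<in> U}"
      by (intro mult_right_mono) (auto intro: Max_ge)
    finally show "measure (noise c q) {eta \<in> space (noise c q). Xmap A h s t1 eta \<in> U}
        \<le> exp (Max (range eps))
          * measure (noise c q) {eta \<in> space (noise c q). Xmap A h s t2 eta \<in> U}" .
  qed
  with single show ?thesis by blast
qed

end
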